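(* Let $\tau_n$ be a uniformly random element of $\mathrm{Av}_n(321)$ and let $(a_n)$, $(b_n)$ be sequences of integers with $0<a_n\le b_n$. Then \[ \lim_{n\to\infty}\mathbb{P}\big(\tau_n(i)=i \text{ for some } i\in[a_n,b_n]\big)=0 \] if and only if $a_n\to\infty$ and $n-b_n\to\infty$.
   Context: $\mathrm{Av}_n(321)$ is the set of permutations $\tau\in S_n$ containing no indices $i<j<k$ with $\tau(i)>\tau(j)>\tau(k)$. *)

theory Defs
  imports Complex_Main "HOL-Combinatorics.Permutations"
begin

text \<open>Av_n(321): permutations of [n] = {1..n} with no decreasing subsequence of length 3.
  Permutations are functions nat => nat that permute {1..n} (identity outside).\<close>
definition av321 :: "nat \<Rightarrow> (nat \<Rightarrow> nat) set" where
  "av321 n = {\<tau>. \<tau> permutes {1..n} \<and>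
     \<not> (\<exists>i j k. 1 \<le> i \<and> i < j \<and> j < k \<and> k \<le> n \<and> \<tau> i > \<tau> j \<and> \<tau> j > \<tau> k)}"

definition prob_fixed_in :: "nat \<Rightarrow> int \<Rightarrow> int \<Rightarrow> real" where
  "prob_fixed_in n a b =
     real (card {\<tau> \<in> av321 n. \<exists>i::nat. a \<le> int i \<and> int i \<le> b \<and> \<tau> i = i}) / real (card (av321 n))"

end

theory Submission
  imports Defs "HOL-Analysis.Summation_Tests"
begin

text \<open>A 321-avoiding permutation of \<open>{1..n+1}\<close> arises from one of \<open>{1..n}\<close> by inserting
  \<open>n + 1\<close> at an active site, i.e. a position after which the entries increase. The numbers of
  active sites follow the generating tree \<open>k \<mapsto> 2, \<dots>, k + 1\<close>, whose level counts are ballot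
  numbers; hence \<open>|Av_n(321)|\<close> is the Catalan number \<open>C_n\<close>. A fixed point \<open>i\<close> splits a
  321-avoider into one of \<open>{1..i-1}\<close>, the entry \<open>i\<close>, and a shifted one of \<open>{i+1..n}\<close>, so
  \<open>P(\<tau>(i) = i) = C_(i-1) C_(n-i) / C_n\<close>.

  Since \<open>C_n\<close> is within polynomial factors of \<open>4^n n^(-3/2)\<close>, this ratio is at most
  \<open>i^(-3/2) + (n+1-i)^(-3/2)\<close>; a union bound over \<open>i \<in> [a, b]\<close> then bounds the probability by
  two tails of \<open>\<Sum> j^(-3/2)\<close>, which vanish when \<open>a \<rightarrow> \<infinity>\<close> and \<open>n - b \<rightarrow> \<infinity>\<close>. Conversely,
  \<open>C_(m+d) \<le> 4^d C_m\<close> shows that the single fixed point \<open>i = a\<close> (or \<open>i = b\<close>) already has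
  probability at least \<open>4^(-a)\<close> (or \<open>4^(-(n-b+1))\<close>).\<close>

section \<open>321-avoiding lists\<close>

fun avoids_321 :: "nat list \<Rightarrow> bool" where
  "avoids_321 [] = True"
| "avoids_321 (x # xs) \<longleftrightarrow> sorted (filter (\<lambda>y. y < x) xs) \<and> avoids_321 xs"

definition has_321 :: "nat list \<Rightarrow> bool" where
  "has_321 xs \<longleftrightarrow> (\<exists>i j k. i < j \<and> j < k \<and> k < length xs \<and> xs!i > xs!j \<and> xs!j > xs!k)"

lemma sorted_filter_iff_nth:
  "sorted (filter P xs) \<longleftrightarrow>
     (\<forall>j k. j < k \<longrightarrow> k < length xs \<longrightarrow> P (xs!j) \<longrightarrow> P (xs!k) \<longrightarrow> xs!j \<le> xs!k)"
proof (induction xs)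
  case Nil
  then show ?case by simp
next
  case (Cons y ys)
  have "(\<forall>j k. j < k \<longrightarrow> k < length (y#ys) \<longrightarrow> P ((y#ys)!j) \<longrightarrow> P ((y#ys)!k) \<longrightarrow> (y#ys)!j \<le> (y#ys)!k)
     \<longleftrightarrow> (\<forall>k < length ys. P y \<longrightarrow> P (ys!k) \<longrightarrow> y \<le> ys!k) \<and>
         (\<forall>j k. j < k \<longrightarrow> k < length ys \<longrightarrow> P (ys!j) \<longrightarrow> P (ys!k) \<longrightarrow> ys!j \<le> ys!k)"
    (is "?L \<longleftrightarrow> ?head \<and> ?tail")
  proof
    assume L: ?L
    have ?head using L[rule_format, of 0 "Suc _"] by simp
    moreover have ?tail using L[rule_format, of "Suc _" "Suc _"] by simp
    ultimately show "?head \<and> ?tail" ..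
  next
    assume R: "?head \<and> ?tail"
    show ?L
    proof (intro allI impI)
      fix j k assume jk: "j < k" "k < length (y#ys)" "P ((y#ys)!j)" "P ((y#ys)!k)"
      then obtain k' where k': "k = Suc k'" by (cases k) auto
      show "(y#ys)!j \<le> (y#ys)!k"
        using R jk k' by (cases j) auto
    qed
  qed
  moreover have "?head \<longleftrightarrow> (P y \<longrightarrow> (\<forall>v\<in>set (filter P ys). y \<le> v))"
    by (auto simp: in_set_conv_nth)
  ultimately show ?case using Cons.IH by auto
qed

lemma has_321_Cons:
  "has_321 (x # xs) \<longleftrightarrow> (\<exists>j k. j < k \<and> k < length xs \<and> x > xs!j \<and> xs!j > xs!k) \<or> has_321 xs"
proof
  assume "has_321 (x # xs)"
  then obtain i j k where ijk: "i < j" "j < k" "k < Suc (length xs)"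
      "(x#xs)!i > (x#xs)!j" "(x#xs)!j > (x#xs)!k"
    unfolding has_321_def by auto
  obtain j' k' where jk: "j = Suc j'" "k = Suc k'" using ijk by (cases j; cases k) auto
  show "(\<exists>j k. j < k \<and> k < length xs \<and> x > xs!j \<and> xs!j > xs!k) \<or> has_321 xs"
  proof (cases i)
    case 0
    then show ?thesis using ijk jk by auto
  next
    case (Suc i')
    then show ?thesis using ijk jk unfolding has_321_def
      by (intro disjI2 exI[of _ i'] exI[of _ j'] exI[of _ k']) auto
  qed
next
  assume "(\<exists>j k. j < k \<and> k < length xs \<and> x > xs!j \<and> xs!j > xs!k) \<or> has_321 xs"
  then show "has_321 (x # xs)"
  proof
    assume "\<exists>j k. j < k \<and> k < length xs \<and> x > xs!j \<and> xs!j > xs!k"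
    then obtain j k where "j < k \<and> k < length xs \<and> x > xs!j \<and> xs!j > xs!k" by blast
    then show ?thesis unfolding has_321_def
      by (intro exI[of _ 0] exI[of _ "Suc j"] exI[of _ "Suc k"]) auto
  next
    assume "has_321 xs"
    then obtain i j k where "i < j \<and> j < k \<and> k < length xs \<and> xs!i > xs!j \<and> xs!j > xs!k"
      unfolding has_321_def by blast
    then show ?thesis unfolding has_321_def
      by (intro exI[of _ "Suc i"] exI[of _ "Suc j"] exI[of _ "Suc k"]) auto
  qed
qed

lemma avoids_321_iff: "avoids_321 xs \<longleftrightarrow> \<not> has_321 xs"
proof (induction xs)
  case Nil
  then show ?case by (simp add: has_321_def)
next
  case (Cons x xs)
  then show ?case
    by (simp add: has_321_Cons sorted_filter_iff_nth) (meson not_le order.strict_trans)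
qed

lemma avoids_321_insert_max:
  assumes "\<forall>y\<in>set us \<union> set vs. y < x"
  shows "avoids_321 (us @ x # vs) \<longleftrightarrow> avoids_321 (us @ vs) \<and> sorted vs"
  using assms
proof (induction us)
  case Nil
  then have "filter (\<lambda>y. y < x) vs = vs" by (auto intro: filter_True)
  then show ?case by auto
next
  case (Cons u us)
  then have "filter (\<lambda>y. y < u) (us @ x # vs) = filter (\<lambda>y. y < u) (us @ vs)" by auto
  then show ?case using Cons by auto
qed

lemma avoids_321_append_less:
  assumes "\<forall>y\<in>set ys. \<forall>z\<in>set zs. y < z"
  shows "avoids_321 (ys @ zs) \<longleftrightarrow> avoids_321 ys \<and> avoids_321 zs"
  using assms
proof (induction ys)
  case Nil
  then show ?case by simp
next
  case (Cons u ys)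
  then have "filter (\<lambda>y. y < u) (ys @ zs) = filter (\<lambda>y. y < u) ys" by (auto intro!: filter_False)
  then show ?case using Cons by auto
qed

lemma avoids_321_map_add: "avoids_321 (map (\<lambda>z. z + c) zs) \<longleftrightarrow> avoids_321 zs"
proof (induction zs)
  case Nil
  then show ?case by simp
next
  case (Cons u zs)
  have "filter (\<lambda>y. y < u + c) (map (\<lambda>z. z + c) zs) = map (\<lambda>z. z + c) (filter (\<lambda>y. y < u) zs)"
    by (induction zs) auto
  then show ?case using Cons by (simp add: sorted_map)
qed

lemma avoids_321_append_Cons_pattern:
  assumes "avoids_321 (ys @ x # zs)" "y \<in> set ys" "z \<in> set zs"
  shows "\<not> (y > x \<and> x > z)"
  using assms
proof (induction ys)
  case Nil
  then show ?case by simp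
next
  case (Cons u ys)
  show ?case
  proof (cases "u = y")
    case True
    with Cons.prems have "sorted (filter (\<lambda>v. v < y) ys @ filter (\<lambda>v. v < y) (x # zs))" by simp
    then have "x < y \<Longrightarrow> \<forall>v\<in>set zs. v < y \<longrightarrow> x \<le> v" by (simp add: sorted_append)
    then show ?thesis using Cons.prems(3) by force
  next
    case False
    then show ?thesis using Cons by auto
  qed
qed

section \<open>Permutations as lists\<close>

definition av321_lists :: "nat \<Rightarrow> nat list set" where
  "av321_lists n = {xs. distinct xs \<and> set xs = {1..n} \<and> avoids_321 xs}"

lemma length_av321_lists: "xs \<in> av321_lists n \<Longrightarrow> length xs = n"
  unfolding av321_lists_def using distinct_card by fastforce

lemma finite_av321_lists: "finite (av321_lists n)"
proof (rule finite_subset)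
  show "av321_lists n \<subseteq> {xs. set xs \<subseteq> {1..n} \<and> length xs = n}"
    using length_av321_lists unfolding av321_lists_def by auto
  show "finite {xs. set xs \<subseteq> {1..n} \<and> length xs = n}"
    by (rule finite_lists_length_eq) simp
qed

lemma av321_lists_0: "av321_lists 0 = {[]}"
  unfolding av321_lists_def by auto

definition perm_list :: "nat \<Rightarrow> (nat \<Rightarrow> nat) \<Rightarrow> nat list" where
  "perm_list n \<tau> = map \<tau> [1..<Suc n]"

lemma length_perm_list [simp]: "length (perm_list n \<tau>) = n"
  unfolding perm_list_def by simp

lemma nth_perm_list: "t < n \<Longrightarrow> perm_list n \<tau> ! t = \<tau> (Suc t)"
  unfolding perm_list_def by (simp add: nth_map_upt del: upt_Suc)

lemma has_321_perm_list:
  "has_321 (perm_list n \<tau>) \<longleftrightarrow>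
     (\<exists>i j k. 1 \<le> i \<and> i < j \<and> j < k \<and> k \<le> n \<and> \<tau> i > \<tau> j \<and> \<tau> j > \<tau> k)"
proof
  assume "has_321 (perm_list n \<tau>)"
  then obtain i j k where "i < j" "j < k" "k < n"
      "perm_list n \<tau> ! i > perm_list n \<tau> ! j" "perm_list n \<tau> ! j > perm_list n \<tau> ! k"
    unfolding has_321_def by auto
  then show "\<exists>i j k. 1 \<le> i \<and> i < j \<and> j < k \<and> k \<le> n \<and> \<tau> i > \<tau> j \<and> \<tau> j > \<tau> k"
    by (intro exI[of _ "Suc i"] exI[of _ "Suc j"] exI[of _ "Suc k"]) (auto simp: nth_perm_list)
next
  assume "\<exists>i j k. 1 \<le> i \<and> i < j \<and> j < k \<and> k \<le> n \<and> \<tau> i > \<tau> j \<and> \<tau> j > \<tau> k"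
  then obtain i j k where "1 \<le> i" "i < j" "j < k" "k \<le> n" "\<tau> i > \<tau> j" "\<tau> j > \<tau> k"
    by blast
  then show "has_321 (perm_list n \<tau>)" unfolding has_321_def
    by (intro exI[of _ "i - 1"] exI[of _ "j - 1"] exI[of _ "k - 1"]) (auto simp: nth_perm_list)
qed

lemma av321_iff: "\<tau> \<in> av321 n \<longleftrightarrow> \<tau> permutes {1..n} \<and> avoids_321 (perm_list n \<tau>)"
  unfolding av321_def avoids_321_iff has_321_perm_list by auto

lemma perm_list_in_av321_lists:
  assumes "\<tau> \<in> av321 n"
  shows "perm_list n \<tau> \<in> av321_lists n"
proof -
  have perm: "\<tau> permutes {1..n}" and "avoids_321 (perm_list n \<tau>)"
    using assms av321_iff by auto
  moreover have "set [1..<Suc n] = {1..n}" by auto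
  moreover have "inj_on \<tau> {1..n}" using perm by (rule permutes_inj_on)
  ultimately show ?thesis
    unfolding av321_lists_def perm_list_def by (simp add: distinct_map permutes_image)
qed

lemma inj_on_perm_list: "inj_on (perm_list n) (av321 n)"
proof (rule inj_onI)
  fix \<tau> \<sigma> assume eq: "\<tau> \<in> av321 n" "\<sigma> \<in> av321 n" "perm_list n \<tau> = perm_list n \<sigma>"
  then have perm: "\<tau> permutes {1..n}" "\<sigma> permutes {1..n}" using av321_iff by auto
  show "\<tau> = \<sigma>"
  proof
    fix x
    show "\<tau> x = \<sigma> x"
    proof (cases "x \<in> {1..n}")
      case True
      then have "x - 1 < n" "Suc (x - 1) = x" by auto
      then show ?thesis using eq(3) nth_perm_list[of "x - 1" n] by metis
    next
      case False
      then show ?thesis using perm by (simp add: permutes_not_in)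
    qed
  qed
qed

lemma av321_lists_subset_image_perm_list: "av321_lists n \<subseteq> perm_list n ` av321 n"
proof
  fix xs assume xs: "xs \<in> av321_lists n"
  then have dist: "distinct xs" and set_xs: "set xs = {1..n}" and "avoids_321 xs"
      and len: "length xs = n"
    using length_av321_lists unfolding av321_lists_def by auto
  define \<tau> where "\<tau> x = (if x \<in> {1..n} then xs ! (x - 1) else x)" for x
  have list: "perm_list n \<tau> = xs"
    by (rule nth_equalityI) (auto simp: len nth_perm_list \<tau>_def)
  have "\<tau> ` {1..n} = (\<lambda>t. xs ! t) ` {0..<n}"
    unfolding \<tau>_def by (force intro: image_eqI[where x = "Suc _"])
  also have "\<dots> = set xs" using len by (auto simp: in_set_conv_nth)
  finally have "\<tau> ` {1..n} = {1..n}" using set_xs by simp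
  moreover have "inj_on \<tau> {1..n}"
    using dist len by (auto simp: inj_on_def \<tau>_def nth_eq_iff_index_eq)
  ultimately have "\<tau> permutes {1..n}"
    by (intro bij_imp_permutes) (auto simp: bij_betw_def \<tau>_def)
  then have "\<tau> \<in> av321 n" using av321_iff list \<open>avoids_321 xs\<close> by simp
  then show "xs \<in> perm_list n ` av321 n" using list by blast
qed

lemma bij_betw_perm_list: "bij_betw (perm_list n) (av321 n) (av321_lists n)"
  unfolding bij_betw_def
  using inj_on_perm_list perm_list_in_av321_lists av321_lists_subset_image_perm_list by blast

lemma card_av321: "card (av321 n) = card (av321_lists n)"
  using bij_betw_perm_list by (rule bij_betw_same_card)

lemma finite_av321: "finite (av321 n)"
  using bij_betw_perm_list finite_av321_lists bij_betw_finite by blast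

lemma card_av321_fixing:
  assumes "1 \<le> i" "i \<le> n"
  shows "card {\<tau> \<in> av321 n. \<tau> i = i} = card {xs \<in> av321_lists n. xs ! (i - 1) = i}"
proof (rule bij_betw_same_card, rule bij_betw_subset)
  show "bij_betw (perm_list n) (av321 n) (av321_lists n)" by (rule bij_betw_perm_list)
  have nth: "perm_list n \<tau> ! (i - 1) = \<tau> i" for \<tau> using assms nth_perm_list[of "i - 1" n \<tau>] by simp
  show "perm_list n ` {\<tau> \<in> av321 n. \<tau> i = i} = {xs \<in> av321_lists n. xs ! (i - 1) = i}"
  proof
    show "perm_list n ` {\<tau> \<in> av321 n. \<tau> i = i} \<subseteq> {xs \<in> av321_lists n. xs ! (i - 1) = i}"
      using nth perm_list_in_av321_lists by auto
    show "{xs \<in> av321_lists n. xs ! (i - 1) = i} \<subseteq> perm_list n ` {\<tau> \<in> av321 n. \<tau> i = i}"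
    proof
      fix xs assume xs: "xs \<in> {xs \<in> av321_lists n. xs ! (i - 1) = i}"
      then obtain \<tau> where "\<tau> \<in> av321 n" "xs = perm_list n \<tau>"
        using av321_lists_subset_image_perm_list by blast
      then show "xs \<in> perm_list n ` {\<tau> \<in> av321 n. \<tau> i = i}" using xs nth by auto
    qed
  qed
qed auto

section \<open>Active sites and the generating tree\<close>

definition insert_at :: "nat \<Rightarrow> 'a \<Rightarrow> 'a list \<Rightarrow> 'a list" where
  "insert_at p x xs = take p xs @ x # drop p xs"

lemma set_insert_at: "set (insert_at p x xs) = insert x (set xs)"
proof -
  have "set (take p xs) \<union> set (drop p xs) = set xs" by (metis append_take_drop_id set_append)
  then show ?thesis by (auto simp: insert_at_def)
qed

lemma distinct_insert_at:
  assumes "distinct xs" "x \<notin> set xs"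
  shows "distinct (insert_at p x xs)"
proof -
  have "distinct (take p xs @ drop p xs)" using assms(1) by simp
  moreover have "set (take p xs) \<union> set (drop p xs) = set xs" by (metis append_take_drop_id set_append)
  ultimately show ?thesis using assms(2) unfolding insert_at_def by (auto simp del: append_take_drop_id)
qed

lemma insert_at_inj:
  assumes "x \<notin> set ys" "x \<notin> set ys'" "p \<le> length ys" "p' \<le> length ys'"
    and "insert_at p x ys = insert_at p' x ys'"
  shows "p = p' \<and> ys = ys'"
proof -
  have "x \<notin> set (take p ys)" "x \<notin> set (drop p ys)"
    using assms(1) by (auto dest: in_set_takeD in_set_dropD)
  then have "take p ys = take p' ys' \<and> drop p ys = drop p' ys'"
    using assms(5) unfolding insert_at_def by (simp add: append_Cons_eq_iff)
  then show ?thesis using assms(3,4) by (metis append_take_drop_id length_take min.absorb2)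
qed

text \<open>The active sites of a 321-avoiding list are the positions at which a new maximum can be
  inserted without creating a 321 pattern.\<close>

definition active_sites :: "nat list \<Rightarrow> nat set" where
  "active_sites xs = {p. p \<le> length xs \<and> sorted (drop p xs)}"

definition num_sites :: "nat list \<Rightarrow> nat" where
  "num_sites xs = card (active_sites xs)"

lemma finite_active_sites: "finite (active_sites xs)"
  unfolding active_sites_def by auto

lemma sorted_drop_mono: "sorted (drop p xs) \<Longrightarrow> p \<le> r \<Longrightarrow> sorted (drop r xs)"
  using sorted_wrt_drop[of "(\<le>)" "drop p xs" "r - p"] by simp

lemma active_sites_eq_interval: "active_sites xs = {Min (active_sites xs)..length xs}"
proof (intro equalityI subsetI)
  fix p assume p: "p \<in> active_sites xs"
  then have "Min (active_sites xs) \<le> p" by (rule Min_le[OF finite_active_sites])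
  moreover have "p \<le> length xs" using p unfolding active_sites_def by simp
  ultimately show "p \<in> {Min (active_sites xs)..length xs}" by simp
next
  have "length xs \<in> active_sites xs" unfolding active_sites_def by simp
  then have "Min (active_sites xs) \<in> active_sites xs"
    using finite_active_sites by (intro Min_in) auto
  then have sorted_min: "sorted (drop (Min (active_sites xs)) xs)"
    by (simp add: active_sites_def)
  fix p assume p: "p \<in> {Min (active_sites xs)..length xs}"
  then have "sorted (drop p xs)" using sorted_drop_mono[OF sorted_min] by simp
  moreover have "p \<le> length xs" using p by simp
  ultimately show "p \<in> active_sites xs" unfolding active_sites_def by simp
qed

lemma num_sites_eq: "num_sites xs = length xs + 1 - Min (active_sites xs)"
  unfolding num_sites_def by (subst active_sites_eq_interval) simp

lemma num_sites_bounds: "1 \<le> num_sites xs" "num_sites xs \<le> length xs + 1"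
proof -
  have "Min (active_sites xs) \<le> length xs"
    using finite_active_sites by (intro Min_le) (auto simp: active_sites_def)
  then show "1 \<le> num_sites xs" "num_sites xs \<le> length xs + 1" using num_sites_eq[of xs] by auto
qed

lemma num_sites_Nil: "num_sites [] = 1"
  unfolding num_sites_def active_sites_def by simp

lemma av321_lists_Suc_eq:
  "av321_lists (Suc n) =
     (\<lambda>(ys, p). insert_at p (Suc n) ys) ` (SIGMA ys:av321_lists n. active_sites ys)"
proof (intro equalityI subsetI)
  fix xs assume "xs \<in> av321_lists (Suc n)"
  then have dist: "distinct xs" and set_xs: "set xs = {1..Suc n}" and "avoids_321 xs"
    unfolding av321_lists_def by auto
  have "Suc n \<in> set xs" using set_xs by simp
  then obtain us vs where xs: "xs = us @ Suc n # vs" by (meson split_list)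
  have "insert (Suc n) (set us \<union> set vs) = {1..Suc n}" using set_xs xs by simp
  moreover have "Suc n \<notin> set us \<union> set vs" using dist xs by simp
  ultimately have "set us \<union> set vs = {1..Suc n} - {Suc n}" by blast
  also have "\<dots> = {1..n}" by auto
  finally have set_us_vs: "set us \<union> set vs = {1..n}" .
  then have less: "\<forall>y\<in>set us \<union> set vs. y < Suc n" by auto
  then have "avoids_321 (us @ vs)" "sorted vs"
    using avoids_321_insert_max[OF less] \<open>avoids_321 xs\<close> xs by auto
  moreover have "set (us @ vs) = {1..n}" using set_us_vs by simp
  ultimately have us_vs: "us @ vs \<in> av321_lists n" using dist xs unfolding av321_lists_def by auto
  then have "length us \<in> active_sites (us @ vs)"
    using length_av321_lists \<open>sorted vs\<close> by (auto simp: active_sites_def)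
  moreover have "xs = insert_at (length us) (Suc n) (us @ vs)" using xs by (simp add: insert_at_def)
  ultimately show "xs \<in> (\<lambda>(ys, p). insert_at p (Suc n) ys) ` (SIGMA ys:av321_lists n. active_sites ys)"
    using us_vs by (intro image_eqI[of _ _ "(us @ vs, length us)"]) auto
next
  fix xs assume "xs \<in> (\<lambda>(ys, p). insert_at p (Suc n) ys) ` (SIGMA ys:av321_lists n. active_sites ys)"
  then obtain ys p where ys: "ys \<in> av321_lists n" and p: "p \<in> active_sites ys"
      and xs: "xs = insert_at p (Suc n) ys"
    by auto
  have dist: "distinct ys" and set_ys: "set ys = {1..n}" and "avoids_321 ys"
    using ys unfolding av321_lists_def by auto
  have "\<forall>y\<in>set (take p ys) \<union> set (drop p ys). y < Suc n"
    using set_ys by (auto dest: in_set_takeD in_set_dropD)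
  from avoids_321_insert_max[OF this] have "avoids_321 xs"
    using \<open>avoids_321 ys\<close> p xs by (simp add: insert_at_def active_sites_def)
  moreover have "distinct xs" using distinct_insert_at[OF dist] set_ys xs by simp
  moreover have "set xs = {1..Suc n}" using set_ys xs by (auto simp: set_insert_at)
  ultimately show "xs \<in> av321_lists (Suc n)" unfolding av321_lists_def by auto
qed

lemma inj_on_insert_at_max:
  "inj_on (\<lambda>(ys, p). insert_at p (Suc n) ys) (SIGMA ys:av321_lists n. active_sites ys)"
proof (rule inj_onI, clarsimp)
  fix ys p ys' p'
  assume "ys \<in> av321_lists n" "ys' \<in> av321_lists n" "p \<in> active_sites ys" "p' \<in> active_sites ys'"
    and "insert_at p (Suc n) ys = insert_at p' (Suc n) ys'"
  then show "ys = ys' \<and> p = p'"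
    using insert_at_inj[of "Suc n" ys ys' p p'] by (auto simp: av321_lists_def active_sites_def)
qed

lemma active_sites_insert_at_max:
  assumes "length ys = n" "\<forall>y\<in>set ys. y < Suc n" "p \<in> active_sites ys"
  shows "active_sites (insert_at p (Suc n) ys) =
           (if p = n then insert (Suc n) (active_sites ys) else {Suc p..Suc n})"
proof -
  have pn: "p \<le> n" and sorted_p: "sorted (drop p ys)" using assms unfolding active_sites_def by auto
  let ?zs = "insert_at p (Suc n) ys"
  have len: "length ?zs = Suc n" using assms pn unfolding insert_at_def by simp
  show ?thesis
  proof (cases "p = n")
    case True
    then have zs: "?zs = ys @ [Suc n]" using assms unfolding insert_at_def by simp
    have "sorted (drop r ?zs) \<longleftrightarrow> sorted (drop r ys)" if "r \<le> n" for r
    proof -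
      have "\<forall>y\<in>set (drop r ys). y \<le> Suc n" using assms(2) by (meson in_set_dropD less_imp_le)
      then show ?thesis using zs that assms(1) by (simp add: sorted_append)
    qed
    then show ?thesis
      using True len assms(1) unfolding active_sites_def by (auto simp: le_Suc_eq)
  next
    case False
    then have "p < n" using pn by simp
    have "r \<in> active_sites ?zs \<longleftrightarrow> r \<in> {Suc p..Suc n}" for r
    proof (cases "r \<le> p")
      case True
      obtain w ws where w: "drop p ys = w # ws" using \<open>p < n\<close> assms(1) by (cases "drop p ys") auto
      then have "w < Suc n" using assms(2) by (metis in_set_dropD list.set_intros(1))
      moreover have "drop r ?zs = drop r (take p ys) @ Suc n # drop p ys"
        using True pn assms(1) unfolding insert_at_def by (simp add: min_def)
      ultimately have "\<not> sorted (drop r ?zs)" using w by (auto simp: sorted_append)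
      then show ?thesis using True by (simp add: active_sites_def)
    next
      case False
      then have "drop r ?zs = drop (r - Suc p) (drop p ys)"
        unfolding insert_at_def using pn assms(1) by (simp add: drop_Cons' min_def)
      moreover have "sorted (drop (r - Suc p) (drop p ys))" using sorted_p by (rule sorted_wrt_drop)
      ultimately have "sorted (drop r ?zs)" by (simp only:)
      then show ?thesis using False len by (auto simp: active_sites_def)
    qed
    then show ?thesis using False by (simp add: set_eq_iff)
  qed
qed

definition num_sites_after :: "nat list \<Rightarrow> nat \<Rightarrow> nat" where
  "num_sites_after ys p = (if p = length ys then num_sites ys + 1 else length ys - p + 1)"

lemma num_sites_insert_at_max:
  assumes "ys \<in> av321_lists n" "p \<in> active_sites ys"
  shows "num_sites (insert_at p (Suc n) ys) = num_sites_after ys p"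
proof -
  have len: "length ys = n" using length_av321_lists[OF assms(1)] .
  moreover have "\<forall>y\<in>set ys. y < Suc n" using assms(1) unfolding av321_lists_def by auto
  moreover have "Suc n \<notin> active_sites ys" "p \<le> n"
    using assms(2) len unfolding active_sites_def by auto
  ultimately show ?thesis
    using active_sites_insert_at_max assms(2) finite_active_sites
    unfolding num_sites_def num_sites_after_def by auto
qed

text \<open>Every value \<open>2, \<dots>, num_sites ys + 1\<close> is taken exactly once: this is the generating tree
  of 321-avoiding permutations, each node with \<open>k\<close> sites having children with \<open>2, \<dots>, k + 1\<close>
  sites.\<close>

lemma card_num_sites_after_eq:
  "card {p \<in> active_sites ys. num_sites_after ys p = k} = (if 2 \<le> k \<and> k \<le> num_sites ys + 1 then 1 else 0)"
proof -
  define n where "n = length ys"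
  define q where "q = Min (active_sites ys)"
  have sites: "active_sites ys = {q..n}" unfolding q_def n_def by (rule active_sites_eq_interval)
  have "n \<in> active_sites ys" unfolding active_sites_def n_def by simp
  then have "q \<le> n" using sites by simp
  have num: "num_sites ys = n + 1 - q" unfolding q_def n_def by (rule num_sites_eq)
  show ?thesis
  proof (cases "2 \<le> k \<and> k \<le> num_sites ys + 1")
    case True
    have "{p \<in> active_sites ys. num_sites_after ys p = k} = {if k = n + 2 - q then n else n + 1 - k}"
    proof (cases "k = n + 2 - q")
      case True
      then show ?thesis using \<open>q \<le> n\<close> unfolding sites num_sites_after_def num n_def[symmetric] by auto
    next
      case False
      then show ?thesis using \<open>q \<le> n\<close> \<open>2 \<le> k \<and> k \<le> num_sites ys + 1\<close>
        unfolding sites num_sites_after_def num n_def[symmetric] by auto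
    qed
    then show ?thesis using True by simp
  next
    case False
    then have "{p \<in> active_sites ys. num_sites_after ys p = k} = {}"
      using \<open>q \<le> n\<close> unfolding sites num_sites_after_def num n_def[symmetric] by auto
    then show ?thesis using False by (simp only: card.empty if_False)
  qed
qed

definition count_by_sites :: "nat \<Rightarrow> nat \<Rightarrow> nat" where
  "count_by_sites n k = card {xs \<in> av321_lists n. num_sites xs = k}"

lemma count_by_sites_Suc:
  "count_by_sites (Suc n) k = card {ys \<in> av321_lists n. 2 \<le> k \<and> k \<le> num_sites ys + 1}"
proof -
  let ?ins = "\<lambda>(ys, p). insert_at p (Suc n) ys"
  let ?S = "SIGMA ys:av321_lists n. {p \<in> active_sites ys. num_sites_after ys p = k}"
  have "?ins ` ?S = {xs \<in> ?ins ` (SIGMA ys:av321_lists n. active_sites ys). num_sites xs = k}"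
  proof (intro equalityI subsetI)
    fix xs assume "xs \<in> ?ins ` ?S"
    then obtain ys p where "ys \<in> av321_lists n" "p \<in> active_sites ys"
        "num_sites_after ys p = k" "xs = insert_at p (Suc n) ys"
      by auto
    then show "xs \<in> {xs \<in> ?ins ` (SIGMA ys:av321_lists n. active_sites ys). num_sites xs = k}"
      using num_sites_insert_at_max by auto
  next
    fix xs assume "xs \<in> {xs \<in> ?ins ` (SIGMA ys:av321_lists n. active_sites ys). num_sites xs = k}"
    then obtain ys p where "ys \<in> av321_lists n" "p \<in> active_sites ys"
        "num_sites xs = k" "xs = insert_at p (Suc n) ys"
      by auto
    then show "xs \<in> ?ins ` ?S"
      using num_sites_insert_at_max by (intro image_eqI[of _ _ "(ys, p)"]) auto
  qed
  then have "{xs \<in> av321_lists (Suc n). num_sites xs = k} = ?ins ` ?S"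
    unfolding av321_lists_Suc_eq by simp
  moreover have "inj_on ?ins ?S" by (rule inj_on_subset[OF inj_on_insert_at_max]) auto
  ultimately have "count_by_sites (Suc n) k = card ?S"
    unfolding count_by_sites_def by (simp add: card_image)
  also have "\<dots> = (\<Sum>ys\<in>av321_lists n. card {p \<in> active_sites ys. num_sites_after ys p = k})"
    by (intro card_SigmaI finite_av321_lists) (simp add: finite_active_sites)
  also have "\<dots> = (\<Sum>ys\<in>av321_lists n. if 2 \<le> k \<and> k \<le> num_sites ys + 1 then 1 else 0)"
    by (simp only: card_num_sites_after_eq)
  also have "\<dots> = card {ys \<in> av321_lists n. 2 \<le> k \<and> k \<le> num_sites ys + 1}"
    using finite_av321_lists by (simp add: sum.If_cases Int_def)
  finally show ?thesis .
qed

section \<open>Counting by ballot numbers\<close>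

lemma card_av321_lists_eq_count_by_sites: "card (av321_lists n) = count_by_sites (Suc n) 2"
proof -
  have "{ys \<in> av321_lists n. 2 \<le> (2::nat) \<and> 2 \<le> num_sites ys + 1} = av321_lists n"
    using num_sites_bounds(1) by auto
  then show ?thesis using count_by_sites_Suc by simp
qed

lemma card_filter_ge_eq_sum:
  fixes f :: "'a \<Rightarrow> nat"
  assumes "finite A" "\<forall>x\<in>A. f x \<le> N"
  shows "card {x \<in> A. m \<le> f x} = (\<Sum>j\<in>{m..N}. card {x \<in> A. f x = j})"
proof -
  have "{x \<in> A. m \<le> f x} = (\<Union>j\<in>{m..N}. {x \<in> A. f x = j})" using assms(2) by auto
  then show ?thesis using assms(1) by (auto intro: card_UN_disjoint)
qed

definition ballot :: "nat \<Rightarrow> nat \<Rightarrow> int" where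
  "ballot n k = int ((2*n - k) choose (n - 1)) - int ((2*n - k) choose n)"

lemma ballot_1: "n \<ge> 1 \<Longrightarrow> ballot n 1 = 0"
proof -
  assume "n \<ge> 1"
  then have "(2*n - 1) choose (n - 1) = (2*n - 1) choose ((2*n - 1) - (n - 1))"
    by (intro binomial_symmetric) simp
  moreover have "(2*n - 1) - (n - 1) = n" using \<open>n \<ge> 1\<close> by simp
  ultimately show ?thesis unfolding ballot_def by simp
qed

lemma ballot_last: "n \<ge> 1 \<Longrightarrow> ballot n (n + 1) = 1"
proof -
  assume "n \<ge> 1"
  then have "2*n - (n + 1) = n - 1" by simp
  then show ?thesis unfolding ballot_def using \<open>n \<ge> 1\<close> by simp
qed

lemma ballot_pascal:
  assumes "1 \<le> m" "m \<le> n"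
  shows "ballot n m + ballot (Suc n) (m + 2) = ballot (Suc n) (m + 1)"
proof -
  define a where "a = 2*n - m"
  obtain n' where n': "n = Suc n'" using assms by (cases n) auto
  have "2 * Suc n - (m + 1) = Suc a" "2 * Suc n - (m + 2) = a" "2 * n - m = a"
    using assms unfolding a_def by simp_all
  then show ?thesis unfolding ballot_def n' by simp
qed

lemma ballot_sum:
  assumes "n \<ge> 1" "1 \<le> m" "m \<le> n + 1"
  shows "(\<Sum>j\<in>{m..n+1}. ballot n j) = ballot (Suc n) (m + 1)"
  using assms(2,3)
proof (induction "n + 1 - m" arbitrary: m)
  case 0
  then have "m = n + 1" by simp
  moreover have "ballot (Suc n) (Suc n + 1) = 1" by (rule ballot_last) simp
  ultimately show ?case using ballot_last[OF assms(1)] by simp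
next
  case (Suc d)
  then have "{m..n+1} = insert m {Suc m..n+1}" by auto
  then have "(\<Sum>j\<in>{m..n+1}. ballot n j) = ballot n m + (\<Sum>j\<in>{Suc m..n+1}. ballot n j)" by simp
  also have "(\<Sum>j\<in>{Suc m..n+1}. ballot n j) = ballot (Suc n) (Suc m + 1)"
    using Suc by (intro Suc.hyps) auto
  also have "ballot n m + ballot (Suc n) (Suc m + 1) = ballot (Suc n) (m + 1)"
    using ballot_pascal[of m n] Suc.prems Suc.hyps(2) by simp
  finally show ?case .
qed

lemma count_by_sites_eq_ballot:
  "n \<ge> 1 \<Longrightarrow> 1 \<le> k \<Longrightarrow> k \<le> n + 1 \<Longrightarrow> int (count_by_sites n k) = ballot n k"
proof (induction n arbitrary: k rule: nat_induct_at_least)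
  case base
  have "count_by_sites 1 k = card {ys \<in> {[]}. 2 \<le> k \<and> k \<le> num_sites ys + 1}"
    using count_by_sites_Suc[of 0 k] by (simp add: av321_lists_0)
  also have "{ys \<in> {[]}. 2 \<le> k \<and> k \<le> num_sites ys + 1} = (if k = 2 then {[]} else {})"
    using base num_sites_Nil by auto
  finally show ?case using base by (auto simp: ballot_def)
next
  case (Suc n)
  show ?case
  proof (cases "k = 1")
    case True
    then show ?thesis using count_by_sites_Suc[of n k] ballot_1[of "Suc n"] by simp
  next
    case False
    then have "{ys \<in> av321_lists n. 2 \<le> k \<and> k \<le> num_sites ys + 1} =
        {ys \<in> av321_lists n. k - 1 \<le> num_sites ys}"
      using Suc.prems by auto
    then have "count_by_sites (Suc n) k = card {ys \<in> av321_lists n. k - 1 \<le> num_sites ys}"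
      using count_by_sites_Suc by simp
    also have "\<dots> = (\<Sum>j\<in>{k-1..n+1}. count_by_sites n j)"
      unfolding count_by_sites_def
      using num_sites_bounds(2) length_av321_lists
      by (intro card_filter_ge_eq_sum finite_av321_lists) auto
    finally have "int (count_by_sites (Suc n) k) = (\<Sum>j\<in>{k-1..n+1}. int (count_by_sites n j))"
      by simp
    also have "\<dots> = (\<Sum>j\<in>{k-1..n+1}. ballot n j)"
      using Suc.IH False Suc.prems by (intro sum.cong) auto
    also have "\<dots> = ballot (Suc n) (k - 1 + 1)"
      using False Suc.prems by (intro ballot_sum[OF Suc.hyps]) auto
    finally show ?thesis using Suc.prems by simp
  qed
qed

lemma card_av321_lists_int: "int (card (av321_lists n)) = int ((2*n) choose n) - int ((2*n) choose Suc n)"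
  using card_av321_lists_eq_count_by_sites count_by_sites_eq_ballot[of "Suc n" 2]
  by (simp add: ballot_def)

section \<open>Fixed points and Catalan numbers\<close>

lemma av321_lists_append_fixed_point:
  assumes "1 \<le> i" "i \<le> n" "ys \<in> av321_lists (i - 1)" "zs \<in> av321_lists (n - i)"
  shows "ys @ i # map (\<lambda>z. z + i) zs \<in> av321_lists n"
proof -
  let ?ws = "map (\<lambda>z. z + i) zs"
  have "distinct ys" "set ys = {1..i-1}" "avoids_321 ys"
    using assms(3) unfolding av321_lists_def by auto
  moreover have "distinct zs" "set zs = {1..n-i}" "avoids_321 zs"
    using assms(4) unfolding av321_lists_def by auto
  then have "distinct ?ws" "set ?ws = {i+1..n}" "avoids_321 ?ws"
    using assms(2) by (auto simp: distinct_map inj_on_def avoids_321_map_add)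
  moreover have "filter (\<lambda>y. y < i) ?ws = []" using \<open>set ?ws = {i+1..n}\<close> by (auto simp: filter_empty_conv)
  ultimately have "avoids_321 (i # ?ws)" "\<forall>y\<in>set ys. \<forall>z\<in>set (i # ?ws). y < z"
    by auto
  then have "avoids_321 (ys @ i # ?ws)" using avoids_321_append_less \<open>avoids_321 ys\<close> by blast
  moreover have "distinct (ys @ i # ?ws)" "set (ys @ i # ?ws) = {1..n}"
    using \<open>distinct ys\<close> \<open>set ys = {1..i-1}\<close> \<open>distinct ?ws\<close> \<open>set ?ws = {i+1..n}\<close> assms(1,2)
    by auto
  ultimately show ?thesis unfolding av321_lists_def by simp
qed

text \<open>A fixed point \<open>i\<close> of a 321-avoiding permutation separates it: an entry before
  position \<open>i\<close> exceeding \<open>i\<close> would, together with a smaller entry after it, form a 321 pattern.\<close>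

lemma av321_lists_fixed_point_prefix:
  assumes "1 \<le> i" "i \<le> n" "xs \<in> av321_lists n" "xs ! (i - 1) = i"
  shows "set (take (i - 1) xs) = {1..i-1}"
proof -
  have dist: "distinct xs" and set_xs: "set xs = {1..n}" and "avoids_321 xs"
    and len: "length xs = n"
    using assms(3) length_av321_lists unfolding av321_lists_def by auto
  define ys where "ys = take (i - 1) xs"
  define ws where "ws = drop i xs"
  have xs: "xs = ys @ i # ws"
    unfolding ys_def ws_def using id_take_nth_drop[of "i - 1" xs] assms len by simp
  have "distinct ys" "i \<notin> set ys" using dist xs by auto
  have card_ys: "card (set ys) = i - 1"
    using distinct_card[OF \<open>distinct ys\<close>] assms len unfolding ys_def by simp
  have "y < i" if "y \<in> set ys" for y
  proof (rule ccontr)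
    assume "\<not> y < i"
    with that \<open>i \<notin> set ys\<close> have "y > i" by (metis nat_neq_iff)
    then have "\<not> {1..i-1} \<subseteq> set ys"
      using card_mono[of "set ys" "insert y {1..i-1}"] card_ys that assms(1) by auto
    then obtain z where "z \<in> {1..i-1}" "z \<notin> set ys" by blast
    moreover have "z \<in> set xs" using \<open>z \<in> {1..i-1}\<close> set_xs assms(2) by auto
    ultimately have "z \<in> set ws" "z < i" using xs by auto
    then show False
      using avoids_321_append_Cons_pattern[of ys i ws y z] \<open>avoids_321 xs\<close> xs that \<open>y > i\<close>
      by simp
  qed
  then have "set ys \<subseteq> {1..i-1}" using set_xs xs by fastforce
  with card_ys show ?thesis unfolding ys_def[symmetric] by (intro card_subset_eq) auto
qed

lemma av321_lists_fixed_point_split: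
  assumes "1 \<le> i" "i \<le> n" "xs \<in> av321_lists n" "xs ! (i - 1) = i"
  shows "xs \<in> (\<lambda>(ys, zs). ys @ i # map (\<lambda>z. z + i) zs) ` (av321_lists (i - 1) \<times> av321_lists (n - i))"
proof -
  have dist: "distinct xs" and set_xs: "set xs = {1..n}" and "avoids_321 xs"
    and len: "length xs = n"
    using assms(3) length_av321_lists unfolding av321_lists_def by auto
  define ys where "ys = take (i - 1) xs"
  define ws where "ws = drop i xs"
  have xs: "xs = ys @ i # ws"
    unfolding ys_def ws_def using id_take_nth_drop[of "i - 1" xs] assms len by simp
  have set_ys: "set ys = {1..i-1}" unfolding ys_def by (rule av321_lists_fixed_point_prefix[OF assms])
  have set_ws: "set ws = {i+1..n}"
  proof (intro equalityI subsetI)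
    fix x assume "x \<in> set ws"
    then have "x \<in> {1..n}" "x \<noteq> i" "x \<notin> {1..i-1}"
      using set_xs set_ys dist xs by auto
    then show "x \<in> {i+1..n}" by auto
  next
    fix x assume "x \<in> {i+1..n}"
    then have "x \<in> set xs" "x \<noteq> i" "x \<notin> set ys" using set_xs set_ys by auto
    then show "x \<in> set ws" using xs by auto
  qed
  define zs where "zs = map (\<lambda>z. z - i) ws"
  have ws: "ws = map (\<lambda>z. z + i) zs" unfolding zs_def using set_ws by (auto intro: map_idI[symmetric])
  have "(\<lambda>z. z + i) ` set zs = (\<lambda>z. z + i) ` {1..n-i}" using set_ws ws assms(2) by simp
  moreover have "inj (\<lambda>z::nat. z + i)" by (simp add: inj_def)
  ultimately have "set zs = {1..n-i}" by (simp only: inj_image_eq_iff)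
  moreover have "distinct ys" "distinct zs" using dist xs ws by (auto simp: distinct_map)
  moreover have "avoids_321 ys" "avoids_321 zs"
  proof -
    have "\<forall>y\<in>set ys. \<forall>z\<in>set (i # ws). y < z" using set_ys set_ws by auto
    then have "avoids_321 ys \<and> avoids_321 (i # ws)"
      using avoids_321_append_less \<open>avoids_321 xs\<close> xs by blast
    then show "avoids_321 ys" "avoids_321 zs" using ws avoids_321_map_add by auto
  qed
  ultimately have "(ys, zs) \<in> av321_lists (i - 1) \<times> av321_lists (n - i)"
    using set_ys unfolding av321_lists_def by auto
  then show ?thesis using xs ws by (intro image_eqI[of _ _ "(ys, zs)"]) simp_all
qed

lemma card_av321_lists_fixing:
  assumes "1 \<le> i" "i \<le> n"
  shows "card {xs \<in> av321_lists n. xs ! (i - 1) = i} = card (av321_lists (i - 1)) * card (av321_lists (n - i))"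
proof -
  let ?join = "\<lambda>(ys, zs). ys @ i # map (\<lambda>z. z + i) zs"
  have image: "?join ` (av321_lists (i - 1) \<times> av321_lists (n - i)) = {xs \<in> av321_lists n. xs ! (i - 1) = i}"
  proof (intro equalityI subsetI)
    fix xs assume "xs \<in> ?join ` (av321_lists (i - 1) \<times> av321_lists (n - i))"
    then obtain ys zs where "ys \<in> av321_lists (i - 1)" "zs \<in> av321_lists (n - i)"
        "xs = ys @ i # map (\<lambda>z. z + i) zs"
      by auto
    then show "xs \<in> {xs \<in> av321_lists n. xs ! (i - 1) = i}"
      using av321_lists_append_fixed_point[OF assms] length_av321_lists by (simp add: nth_append)
  next
    fix xs assume "xs \<in> {xs \<in> av321_lists n. xs ! (i - 1) = i}"
    then show "xs \<in> ?join ` (av321_lists (i - 1) \<times> av321_lists (n - i))"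
      using av321_lists_fixed_point_split[OF assms] by simp
  qed
  have inj: "inj_on ?join (av321_lists (i - 1) \<times> av321_lists (n - i))"
  proof (rule inj_onI)
    fix a b assume ab: "a \<in> av321_lists (i - 1) \<times> av321_lists (n - i)"
      "b \<in> av321_lists (i - 1) \<times> av321_lists (n - i)" "?join a = ?join b"
    obtain ys zs ys' zs' where a: "a = (ys, zs)" and b: "b = (ys', zs')" by (cases a, cases b) auto
    have "length ys = length ys'" using ab a b length_av321_lists by auto
    then have "ys = ys'" "map (\<lambda>z. z + i) zs = map (\<lambda>z. z + i) zs'" using ab(3) a b by auto
    then show "a = b" using a b by (simp add: inj_map_eq_map inj_def)
  qed
  show ?thesis using card_image[OF inj] unfolding image by (simp add: card_cartesian_product)
qed

definition catalan :: "nat \<Rightarrow> real" where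
  "catalan n = fact (2*n) / (fact n * fact (Suc n))"

lemma card_av321_lists: "real (card (av321_lists n)) = catalan n"
proof (cases "n = 0")
  case True
  then show ?thesis using card_av321_lists_int[of 0] by (simp add: catalan_def)
next
  case False
  have "real (card (av321_lists n)) = real ((2*n) choose n) - real ((2*n) choose Suc n)"
    using card_av321_lists_int[of n] by (metis of_int_diff of_int_of_nat_eq)
  also have "\<dots> = fact (2*n) / (fact n * fact n) - fact (2*n) / (fact (Suc n) * fact (n - 1))"
    using False by (simp add: binomial_fact mult_2 numeral_2_eq_2)
  also have "\<dots> = catalan n"
  proof -
    have "F / (N * (g * (N * g))) - F / ((1 + N) * (N * (g * g))) = F / (N * (g * ((1 + N) * (N * g))))"
      if "N > 0" "g > 0" for F N g :: real
      using that by (simp add: divide_simps) (simp add: algebra_simps)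
    moreover have "(fact n :: real) = real n * fact (n - 1)" using False by (simp add: fact_reduce)
    ultimately show ?thesis using False unfolding catalan_def
      by (simp add: mult.assoc)
  qed
  finally show ?thesis .
qed

section \<open>Estimates for Catalan numbers\<close>

lemma catalan_pos: "catalan n > 0"
  unfolding catalan_def by simp

lemma catalan_Suc: "(real n + 2) * catalan (Suc n) = 2 * (2 * real n + 1) * catalan n"
proof -
  have key: "(N + 2) * ((2 * N + 2) * (2 * N + 1) * F / ((N + 1) * f * ((N + 2) * ((N + 1) * f))))
      = 2 * (2 * N + 1) * (F / (f * ((N + 1) * f)))"
    if "N \<ge> 0" "f > 0" for N F f :: real
    using that by (simp add: divide_simps) (simp add: algebra_simps)
  have "2 * Suc n = Suc (Suc (2 * n))" by simp
  then have fact_2Suc: "fact (2 * Suc n) = (2 * real n + 2) * (2 * real n + 1) * (fact (2 * n) :: real)"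
    by (simp add: algebra_simps)
  have fact_SucSuc: "fact (Suc (Suc n)) = (real n + 2) * ((real n + 1) * (fact n :: real))"
    by (simp add: algebra_simps)
  have fact_Suc: "fact (Suc n) = (real n + 1) * (fact n :: real)" by simp
  show ?thesis unfolding catalan_def fact_2Suc fact_SucSuc fact_Suc by (rule key) auto
qed

lemma catalan_ge_1: "catalan n \<ge> 1"
proof (induction n)
  case 0
  then show ?case by (simp add: catalan_def)
next
  case (Suc n)
  have "(real n + 2) * 1 \<le> 2 * (2 * real n + 1) * catalan n"
    using Suc.IH by (intro order.trans[OF _ mult_left_mono[OF Suc.IH]]) auto
  then show ?case unfolding catalan_Suc[symmetric] by simp
qed

lemma catalan_add_le: "catalan (m + d) \<le> 4 ^ d * catalan m"
proof (induction d)
  case 0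
  then show ?case by simp
next
  case (Suc d)
  have "(real (m + d) + 2) * catalan (m + Suc d) \<le> (real (m + d) + 2) * (4 * catalan (m + d))"
    unfolding add_Suc_right catalan_Suc using catalan_pos[of "m + d"] by (simp add: algebra_simps)
  then have "catalan (m + Suc d) \<le> 4 * catalan (m + d)" by simp
  also have "\<dots> \<le> 4 ^ Suc d * catalan m" using Suc.IH by simp
  finally show ?case .
qed

text \<open>Quantitative forms of \<open>catalan n \<sim> 4 ^ n / (sqrt pi * n powr (3/2))\<close>, valid for all \<open>n\<close>.\<close>

lemma catalan_sq_upper: "catalan n ^ 2 * (real n + 1) ^ 2 * (3 * real n + 1) \<le> 16 ^ n"
proof (induction n)
  case 0
  then show ?case by (simp add: catalan_def)
next
  case (Suc n)
  define x where "x = real n"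
  have "catalan (Suc n) ^ 2 * (real (Suc n) + 1) ^ 2 * (3 * real (Suc n) + 1)
        = ((x + 2) * catalan (Suc n)) ^ 2 * (3 * x + 4)"
    unfolding x_def by (simp add: power2_eq_square algebra_simps)
  also have "\<dots> = catalan n ^ 2 * (4 * (2 * x + 1) ^ 2 * (3 * x + 4))"
    unfolding x_def catalan_Suc by (simp add: power2_eq_square algebra_simps)
  also have "\<dots> \<le> catalan n ^ 2 * (16 * ((x + 1) ^ 2 * (3 * x + 1)))"
    by (intro mult_left_mono) (auto simp: x_def power2_eq_square algebra_simps)
  also have "\<dots> \<le> 16 * 16 ^ n" using Suc.IH unfolding x_def by (simp add: algebra_simps)
  finally show ?case by simp
qed

lemma catalan_sq_lower: "n \<ge> 1 \<Longrightarrow> 16 ^ n \<le> 4 * real n * (real n + 1) ^ 2 * catalan n ^ 2"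
proof (induction n rule: nat_induct_at_least)
  case base
  then show ?case by (simp add: catalan_def)
next
  case (Suc n)
  define x where "x = real n"
  have "16 ^ Suc n \<le> catalan n ^ 2 * (16 * (4 * x * (x + 1) ^ 2))"
    using Suc.IH unfolding x_def by (simp add: algebra_simps)
  also have "\<dots> \<le> catalan n ^ 2 * (4 * (x + 1) * (4 * (2 * x + 1) ^ 2))"
    by (intro mult_left_mono) (auto simp: x_def power2_eq_square algebra_simps)
  also have "\<dots> = 4 * (x + 1) * ((x + 2) * catalan (Suc n)) ^ 2"
    unfolding x_def catalan_Suc by (simp add: power2_eq_square algebra_simps)
  also have "\<dots> = 4 * real (Suc n) * (real (Suc n) + 1) ^ 2 * catalan (Suc n) ^ 2"
    unfolding x_def by (simp add: power2_eq_square algebra_simps)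
  finally show ?case .
qed

lemma catalan_sq_mult_cube_le: "catalan k ^ 2 * (real k + 1) ^ 3 \<le> 16 ^ k"
proof -
  have "catalan k ^ 2 * (real k + 1) ^ 3 = catalan k ^ 2 * (real k + 1) ^ 2 * (real k + 1)"
    by (simp add: power3_eq_cube power2_eq_square)
  also have "\<dots> \<le> catalan k ^ 2 * (real k + 1) ^ 2 * (3 * real k + 1)"
    by (intro mult_left_mono) auto
  also have "\<dots> \<le> 16 ^ k" by (rule catalan_sq_upper)
  finally show ?thesis .
qed

lemma catalan_Suc_sq_lower: "16 ^ Suc n \<le> 4 * (real n + 2) ^ 3 * catalan (Suc n) ^ 2"
proof -
  have "16 ^ Suc n \<le> 4 * real (Suc n) * (real (Suc n) + 1) ^ 2 * catalan (Suc n) ^ 2"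
    by (rule catalan_sq_lower) simp
  also have "\<dots> = 4 * (real n + 1) * (real n + 2) ^ 2 * catalan (Suc n) ^ 2"
    by (simp add: algebra_simps)
  also have "\<dots> \<le> 4 * (real n + 2) * (real n + 2) ^ 2 * catalan (Suc n) ^ 2"
    by (intro mult_right_mono) auto
  also have "\<dots> = 4 * (real n + 2) ^ 3 * catalan (Suc n) ^ 2"
    by (simp add: power3_eq_cube power2_eq_square)
  finally show ?thesis .
qed

lemma sum_cube_le: "(x + y) ^ 3 \<le> 4 * (x ^ 3 + y ^ 3)" if "x \<ge> 0" "y \<ge> 0" for x y :: real
proof -
  have "4 * (x ^ 3 + y ^ 3) - (x + y) ^ 3 = 3 * (x + y) * (x - y) ^ 2"
    by (simp add: power2_eq_square power3_eq_cube algebra_simps)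
  moreover have "3 * (x + y) * (x - y) ^ 2 \<ge> 0" using that by simp
  ultimately show ?thesis by linarith
qed

lemma powr_minus_three_halves_sq: "x > 0 \<Longrightarrow> (x powr (-3/2)) ^ 2 = 1 / x ^ 3"
  for x :: real
proof -
  assume "x > 0"
  have "(x powr (-3/2)) ^ 2 = x powr (of_nat 2 * (-3/2))" using \<open>x > 0\<close> by (intro powr_power) simp
  also have "\<dots> = 1 / x powr 3" by (simp add: powr_minus_divide)
  also have "\<dots> = 1 / x ^ 3" using \<open>x > 0\<close> by simp
  finally show ?thesis .
qed

text \<open>The left-hand side is the probability that a uniform element of \<open>av321 (k + m + 1)\<close>
  fixes \<open>k + 1\<close>.\<close>

lemma catalan_mult_div_catalan_le:
  "catalan k * catalan m / catalan (k + m + 1) \<le> real (k + 1) powr (-3/2) + real (m + 1) powr (-3/2)"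
proof -
  define A B where "A = real k + 1" and "B = real m + 1"
  have "A > 0" "B > 0" unfolding A_def B_def by auto
  let ?X = "catalan k" and ?Y = "catalan m" and ?Z = "catalan (k + m + 1)"
  have "(?X ^ 2 * A ^ 3) * (?Y ^ 2 * B ^ 3) \<le> 16 ^ k * 16 ^ m"
    unfolding A_def B_def using catalan_sq_mult_cube_le by (intro mult_mono) auto
  also have "\<dots> = 16 ^ Suc (k + m) / 16" by (simp add: power_add)
  also have "\<dots> \<le> 4 * (A + B) ^ 3 * ?Z ^ 2 / 16"
    using catalan_Suc_sq_lower[of "k + m"] unfolding A_def B_def by (simp add: add_ac)
  also have "\<dots> \<le> 4 * (4 * (A ^ 3 + B ^ 3)) * ?Z ^ 2 / 16"
    using sum_cube_le[of A B] \<open>A > 0\<close> \<open>B > 0\<close>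
    by (intro divide_right_mono mult_right_mono mult_left_mono) auto
  also have "\<dots> = (A ^ 3 + B ^ 3) * ?Z ^ 2" by simp
  finally have main: "(?X ^ 2 * A ^ 3) * (?Y ^ 2 * B ^ 3) \<le> (A ^ 3 + B ^ 3) * ?Z ^ 2" .
  have pos: "A ^ 3 * B ^ 3 > 0" "?Z ^ 2 > 0"
    using \<open>A > 0\<close> \<open>B > 0\<close> catalan_pos[of "k + m + 1"] by auto
  have "(?X * ?Y / ?Z) ^ 2 = ((?X ^ 2 * A ^ 3) * (?Y ^ 2 * B ^ 3)) / (?Z ^ 2 * (A ^ 3 * B ^ 3))"
    using pos \<open>A > 0\<close> \<open>B > 0\<close> by (simp add: power_mult_distrib power_divide mult_ac)
  also have "\<dots> \<le> ((A ^ 3 + B ^ 3) * ?Z ^ 2) / (?Z ^ 2 * (A ^ 3 * B ^ 3))"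
    using main pos by (intro divide_right_mono) auto
  also have "\<dots> = 1 / A ^ 3 + 1 / B ^ 3" using pos \<open>A > 0\<close> \<open>B > 0\<close> by (simp add: field_simps)
  also have "\<dots> = (A powr (-3/2)) ^ 2 + (B powr (-3/2)) ^ 2"
    using powr_minus_three_halves_sq[OF \<open>A > 0\<close>] powr_minus_three_halves_sq[OF \<open>B > 0\<close>] by simp
  also have "\<dots> \<le> (A powr (-3/2) + B powr (-3/2)) ^ 2"
    by (simp add: power2_sum)
  finally have "?X * ?Y / ?Z \<le> A powr (-3/2) + B powr (-3/2)"
    by (rule power2_le_imp_le) simp
  then show ?thesis unfolding A_def B_def by (simp add: add.commute)
qed

definition zeta_tail :: "nat \<Rightarrow> real" where
  "zeta_tail N = (\<Sum>j. real (j + N) powr (-3/2))"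

lemma summable_powr_minus_three_halves: "summable (\<lambda>j. real j powr (-3/2))"
  by (subst summable_real_powr_iff) simp

lemma sum_le_zeta_tail:
  assumes "finite S" "\<forall>i\<in>S. N \<le> i"
  shows "(\<Sum>i\<in>S. real i powr (-3/2)) \<le> zeta_tail N"
proof -
  have "inj_on (\<lambda>i. i - N) S"
  proof (rule inj_onI)
    fix x y assume "x \<in> S" "y \<in> S" "x - N = y - N"
    with assms(2) show "x = y" by (metis le_add_diff_inverse2)
  qed
  then have "(\<Sum>i\<in>S. real i powr (-3/2)) = (\<Sum>j\<in>(\<lambda>i. i - N) ` S. real (j + N) powr (-3/2))"
    using assms(2) by (simp add: sum.reindex)
  also have "\<dots> \<le> zeta_tail N"
    unfolding zeta_tail_def using assms(1) summable_powr_minus_three_halves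
    by (intro sum_le_suminf) (auto simp only: summable_iff_shift[of "\<lambda>j. real j powr (-3/2)" N]
        powr_ge_zero)
  finally show ?thesis .
qed

lemma zeta_tail_tendsto_0: "zeta_tail \<longlonglongrightarrow> 0"
proof -
  let ?f = "\<lambda>j. real j powr (-3/2)"
  have "zeta_tail = (\<lambda>N. suminf ?f - (\<Sum>j<N. ?f j))"
    unfolding zeta_tail_def using suminf_minus_initial_segment[OF summable_powr_minus_three_halves]
    by simp
  moreover have "(\<lambda>N. suminf ?f - (\<Sum>j<N. ?f j)) \<longlonglongrightarrow> suminf ?f - suminf ?f"
    using summable_LIMSEQ[OF summable_powr_minus_three_halves] by (intro tendsto_diff tendsto_const)
  ultimately show ?thesis by simp
qed

section \<open>Probability of a fixed point in an interval\<close>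

lemma card_av321_eq_catalan: "real (card (av321 n)) = catalan n"
  using card_av321 card_av321_lists by simp

lemma card_av321_fixing_eq_catalan:
  assumes "1 \<le> i" "i \<le> n"
  shows "real (card {\<tau> \<in> av321 n. \<tau> i = i}) = catalan (i - 1) * catalan (n - i)"
  using card_av321_fixing[OF assms] card_av321_lists_fixing[OF assms] card_av321_lists by simp

lemma prob_fixed_in_nonneg: "prob_fixed_in n a b \<ge> 0"
  unfolding prob_fixed_in_def by simp

lemma prob_fixed_in_ge:
  assumes "1 \<le> i" "i \<le> n" "a \<le> int i" "int i \<le> b"
  shows "catalan (i - 1) * catalan (n - i) / catalan n \<le> prob_fixed_in n a b"
proof -
  have "{\<tau> \<in> av321 n. \<tau> i = i} \<subseteq> {\<tau> \<in> av321 n. \<exists>i. a \<le> int i \<and> int i \<le> b \<and> \<tau> i = i}"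
    using assms by blast
  then have "card {\<tau> \<in> av321 n. \<tau> i = i} \<le> card {\<tau> \<in> av321 n. \<exists>i. a \<le> int i \<and> int i \<le> b \<and> \<tau> i = i}"
    by (intro card_mono) (simp_all add: finite_av321)
  then show ?thesis
    unfolding prob_fixed_in_def card_av321_eq_catalan card_av321_fixing_eq_catalan[OF assms(1,2), symmetric]
    using catalan_pos[of n] by (intro divide_right_mono) auto
qed

text \<open>A fixed point beyond \<open>n\<close> is automatic, since \<open>av321 n\<close> consists of permutations of \<open>{1..n}\<close>
  extended by the identity.\<close>

lemma prob_fixed_in_eq_1:
  assumes "n < i" "a \<le> int i" "int i \<le> b"
  shows "prob_fixed_in n a b = 1"
proof -
  have "\<tau> i = i" if "\<tau> \<in> av321 n" for \<tau>
    using that assms(1) unfolding av321_def by (auto simp: permutes_not_in)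
  then have "{\<tau> \<in> av321 n. \<exists>i. a \<le> int i \<and> int i \<le> b \<and> \<tau> i = i} = av321 n"
    using assms(2,3) by blast
  then show ?thesis unfolding prob_fixed_in_def using card_av321_eq_catalan catalan_pos[of n] by simp
qed

lemma prob_fixed_in_lower_left:
  assumes "0 < a" "a \<le> b"
  shows "(1/4) ^ nat a \<le> prob_fixed_in n a b"
proof (cases "n < nat a")
  case True
  then show ?thesis using assms prob_fixed_in_eq_1[of n "nat a"] by (simp add: power_le_one)
next
  case False
  define i where "i = nat a"
  have i: "1 \<le> i" "i \<le> n" "a \<le> int i" "int i \<le> b" using assms False unfolding i_def by auto
  have "(1/4) ^ i = catalan (n - i) / (4 ^ i * catalan (n - i))"
    using catalan_pos[of "n - i"] by (simp add: power_one_over)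
  also have "\<dots> \<le> catalan (n - i) / catalan n"
    using catalan_add_le[of "n - i" i] i(2) catalan_pos[of n] catalan_pos[of "n - i"]
    by (intro divide_left_mono) auto
  also have "\<dots> \<le> catalan (i - 1) * catalan (n - i) / catalan n"
    using catalan_ge_1[of "i - 1"] catalan_pos[of n] catalan_pos[of "n - i"]
    by (intro divide_right_mono) (auto intro: mult_right_mono[of 1, simplified])
  also have "\<dots> \<le> prob_fixed_in n a b" by (rule prob_fixed_in_ge[OF i])
  finally show ?thesis unfolding i_def .
qed

lemma prob_fixed_in_lower_right:
  assumes "0 < a" "a \<le> b"
  shows "1/4 * (1/4) ^ nat (int n - b) \<le> prob_fixed_in n a b"
proof (cases "n < nat b")
  case True
  then show ?thesis using assms prob_fixed_in_eq_1[of n "nat b"] by (simp add: power_le_one)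
next
  case False
  define i where "i = nat b"
  have i: "1 \<le> i" "i \<le> n" "a \<le> int i" "int i \<le> b" using assms False unfolding i_def by auto
  define d where "d = Suc (nat (int n - b))"
  have "n = (i - 1) + d" using i unfolding d_def i_def by auto
  have "1/4 * (1/4) ^ nat (int n - b) = catalan (i - 1) / (4 ^ d * catalan (i - 1))"
    using catalan_pos[of "i - 1"] unfolding d_def by (simp add: power_one_over)
  also have "\<dots> \<le> catalan (i - 1) / catalan n"
    using catalan_add_le[of "i - 1" d] \<open>n = (i - 1) + d\<close> catalan_pos[of n] catalan_pos[of "i - 1"]
    by (intro divide_left_mono) auto
  also have "\<dots> \<le> catalan (i - 1) * catalan (n - i) / catalan n"
    using catalan_ge_1[of "n - i"] catalan_pos[of n] catalan_pos[of "i - 1"]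
    by (intro divide_right_mono) (auto intro: mult_left_mono[of 1, simplified])
  also have "\<dots> \<le> prob_fixed_in n a b" by (rule prob_fixed_in_ge[OF i])
  finally show ?thesis .
qed

text \<open>Union bound over the possible fixed points \<open>i \<in> [a, b]\<close>.\<close>

lemma prob_fixed_in_upper:
  assumes "0 < a" "b \<le> int n"
  shows "prob_fixed_in n a b \<le> zeta_tail (nat a) + zeta_tail (Suc (nat (int n - b)))"
proof -
  define I where "I = {nat a..nat b}"
  have I: "1 \<le> i \<and> i \<le> n" if "i \<in> I" for i using that assms unfolding I_def by auto
  have "{\<tau> \<in> av321 n. \<exists>i. a \<le> int i \<and> int i \<le> b \<and> \<tau> i = i} \<subseteq> (\<Union>i\<in>I. {\<tau> \<in> av321 n. \<tau> i = i})"
  proof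
    fix \<tau> assume "\<tau> \<in> {\<tau> \<in> av321 n. \<exists>i. a \<le> int i \<and> int i \<le> b \<and> \<tau> i = i}"
    then obtain i where "\<tau> \<in> av321 n" "a \<le> int i" "int i \<le> b" "\<tau> i = i" by blast
    moreover from this have "i \<in> I" unfolding I_def by auto
    ultimately show "\<tau> \<in> (\<Union>i\<in>I. {\<tau> \<in> av321 n. \<tau> i = i})" by blast
  qed
  then have "card {\<tau> \<in> av321 n. \<exists>i. a \<le> int i \<and> int i \<le> b \<and> \<tau> i = i}
      \<le> card (\<Union>i\<in>I. {\<tau> \<in> av321 n. \<tau> i = i})"
    by (rule card_mono[rotated]) (simp add: I_def finite_av321)
  also have "\<dots> \<le> (\<Sum>i\<in>I. card {\<tau> \<in> av321 n. \<tau> i = i})"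
    by (rule card_UN_le) (simp add: I_def)
  finally have card_le: "card {\<tau> \<in> av321 n. \<exists>i. a \<le> int i \<and> int i \<le> b \<and> \<tau> i = i}
      \<le> (\<Sum>i\<in>I. card {\<tau> \<in> av321 n. \<tau> i = i})" .
  have "real (card {\<tau> \<in> av321 n. \<exists>i. a \<le> int i \<and> int i \<le> b \<and> \<tau> i = i})
      \<le> (\<Sum>i\<in>I. catalan (i - 1) * catalan (n - i))"
  proof -
    have "real (card {\<tau> \<in> av321 n. \<exists>i. a \<le> int i \<and> int i \<le> b \<and> \<tau> i = i})
        \<le> (\<Sum>i\<in>I. real (card {\<tau> \<in> av321 n. \<tau> i = i}))"
      using of_nat_mono[OF card_le] by (simp add: of_nat_sum)
    also have "\<dots> = (\<Sum>i\<in>I. catalan (i - 1) * catalan (n - i))"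
      using I by (intro sum.cong refl card_av321_fixing_eq_catalan) auto
    finally show ?thesis .
  qed
  then have "prob_fixed_in n a b \<le> (\<Sum>i\<in>I. catalan (i - 1) * catalan (n - i) / catalan n)"
    unfolding prob_fixed_in_def card_av321_eq_catalan sum_divide_distrib[symmetric]
    using catalan_pos[of n] by (intro divide_right_mono) auto
  also have "\<dots> \<le> (\<Sum>i\<in>I. real i powr (-3/2) + real (n + 1 - i) powr (-3/2))"
  proof (rule sum_mono)
    fix i assume "i \<in> I"
    then have "i - 1 + 1 = i" "n - i + 1 = n + 1 - i" "i - 1 + (n - i) + 1 = n" using I[of i] by auto
    then show "catalan (i - 1) * catalan (n - i) / catalan n \<le> real i powr (-3/2) + real (n + 1 - i) powr (-3/2)"
      using catalan_mult_div_catalan_le[of "i - 1" "n - i"] by simp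
  qed
  also have "\<dots> = (\<Sum>i\<in>I. real i powr (-3/2)) + (\<Sum>j\<in>(\<lambda>i. n + 1 - i) ` I. real j powr (-3/2))"
  proof -
    have "inj_on (\<lambda>i. n + 1 - i) I"
    proof (rule inj_onI)
      fix x y assume "x \<in> I" "y \<in> I" "n + 1 - x = n + 1 - y"
      with I[of x] I[of y] show "x = y" by arith
    qed
    then show ?thesis by (simp add: sum.distrib sum.reindex)
  qed
  also have "\<dots> \<le> zeta_tail (nat a) + zeta_tail (Suc (nat (int n - b)))"
    using assms unfolding I_def by (intro add_mono sum_le_zeta_tail) auto
  finally show ?thesis .
qed

lemma filterlim_at_top_if_power_le_tendsto_0:
  fixes f :: "nat \<Rightarrow> int" and p :: "nat \<Rightarrow> real"
  assumes "p \<longlonglongrightarrow> 0" "c > 0" "0 < q" "q < 1" "\<And>n. c * q ^ nat (f n) \<le> p n"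
  shows "filterlim f at_top sequentially"
  unfolding filterlim_at_top
proof
  fix Z :: int
  have "eventually (\<lambda>n. p n < c * q ^ nat Z) sequentially"
    using order_tendstoD(2)[OF assms(1)] assms(2,3) by simp
  then show "eventually (\<lambda>n. Z \<le> f n) sequentially"
  proof (rule eventually_mono)
    fix n assume "p n < c * q ^ nat Z"
    then have "c * q ^ nat (f n) < c * q ^ nat Z" using assms(5)[of n] by linarith
    then have "q ^ nat (f n) < q ^ nat Z" using assms(2) by simp
    then have "nat Z < nat (f n)" using assms(3,4) by (simp add: power_strict_decreasing_iff)
    then show "Z \<le> f n" by linarith
  qed
qed

lemma prob_fixed_in_tendsto_0:
  fixes a b :: "nat \<Rightarrow> int"
  assumes "\<And>n. 0 < a n" "filterlim a at_top sequentially"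
    and "filterlim (\<lambda>n. int n - b n) at_top sequentially"
  shows "(\<lambda>n. prob_fixed_in n (a n) (b n)) \<longlonglongrightarrow> 0"
proof -
  have a: "filterlim (\<lambda>n. nat (a n)) sequentially sequentially"
    using filterlim_compose[OF filterlim_nat_sequentially assms(2)] .
  have b: "filterlim (\<lambda>n. nat (int n - b n)) sequentially sequentially"
    using filterlim_compose[OF filterlim_nat_sequentially assms(3)] .
  have "eventually (\<lambda>n. 0 \<le> int n - b n) sequentially"
    using assms(3) unfolding filterlim_at_top by blast
  then have upper: "eventually (\<lambda>n. prob_fixed_in n (a n) (b n)
      \<le> zeta_tail (nat (a n)) + zeta_tail (Suc (nat (int n - b n)))) sequentially"
    by (rule eventually_mono) (simp add: prob_fixed_in_upper assms(1))
  have "(\<lambda>n. zeta_tail (nat (a n)) + zeta_tail (Suc (nat (int n - b n)))) \<longlonglongrightarrow> 0 + 0"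
    using filterlim_compose[OF zeta_tail_tendsto_0 a]
      filterlim_compose[OF LIMSEQ_Suc[OF zeta_tail_tendsto_0] b]
    by (rule tendsto_add)
  then show ?thesis
    by (intro tendsto_sandwich[OF _ upper tendsto_const]) (simp_all add: prob_fixed_in_nonneg)
qed

theorem corollary1p3:
  fixes a b :: "nat \<Rightarrow> int"
  assumes "\<And>n. 0 < a n" and "\<And>n. a n \<le> b n"
  shows "(\<lambda>n. prob_fixed_in n (a n) (b n)) \<longlonglongrightarrow> 0 \<longleftrightarrow>
         (filterlim a at_top sequentially \<and> filterlim (\<lambda>n. int n - b n) at_top sequentially)"
proof
  assume lim: "(\<lambda>n. prob_fixed_in n (a n) (b n)) \<longlonglongrightarrow> 0"
  show "filterlim a at_top sequentially \<and> filterlim (\<lambda>n. int n - b n) at_top sequentially"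
    using filterlim_at_top_if_power_le_tendsto_0[where f = a and c = 1 and q = "1/4", OF lim]
      filterlim_at_top_if_power_le_tendsto_0[where f = "\<lambda>n. int n - b n" and c = "1/4" and q = "1/4", OF lim]
      prob_fixed_in_lower_left[OF assms] prob_fixed_in_lower_right[OF assms]
    by simp
next
  assume "filterlim a at_top sequentially \<and> filterlim (\<lambda>n. int n - b n) at_top sequentially"
  then show "(\<lambda>n. prob_fixed_in n (a n) (b n)) \<longlonglongrightarrow> 0"
    using assms(1) by (intro prob_fixed_in_tendsto_0) auto
qed
end
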